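(* The terminal value problem $$\partial_tv(t,q)+v(t,q)C^S(q)-v(t,q)\,C\sum_{j\in\{a,b\}}\Big(\frac{v(t,q)}{\sum_{i\in\mathcal G}v(t,q\ominus_i\phi(j))\mathbf 1_{\{\phi(j)q^i>-\bar q\}}}\Big)^{\frac{k\varpi}{\sigma\eta}}=0,\quad (t,q)\in[0,T)\times\mathcal Q^N,\qquad v(T,q)=-1,\ q\in\mathcal Q^N,$$ (a system of $(2\bar q+1)^N$ ordinary differential equations) admits a unique bounded solution $v:[0,T]\times\mathcal Q^N\to\mathbb R$, and this solution is negative.
   Context: Fix integers $N\ge1$, $\bar q\in\mathbb N$, reals $T,A,k,\sigma,c,\varpi,\eta>0$, $\gamma_1,\dots,\gamma_N>0$. $\mathcal Q:=\{-\bar q,\dots,\bar q\}$; $\phi(a)=1$, $\phi(b)=-1$; $q\ominus_ix$ is $q$ with $i$-th coordinate $q^i-x$ (so $q\ominus_i(-1)$ adds one to $q^i$); $\mathcal G:=\{i:\gamma_i=\max_m\gamma_m\}$. A term in the sum over $j$ whose denominator is an empty sum (all indicators zero) is interpreted as $0$. $\mu_{i,j}:=-\eta\kappa\prod_{m\notin\{i,j\}}\gamma_m$ ($i\ne j$), $\mu_{i,i}:=\kappa(\prod_{j\ne i}\gamma_j+\eta\sum_{j\ne i}\prod_{m\notin\{i,j\}}\gamma_m)$, $\kappa^{-1}:=\prod_i\gamma_i+\eta\sum_j\prod_{m\ne j}\gamma_m$. $C^S(q):=\sum_{i=1}^N\frac\eta2\sigma^2\gamma_i\big(q^i-\sum_{j}\mu_{i,j}\gamma_jq^j\big)^2+\frac{\eta^2\sigma^2}2\big(\sum_i\sum_j\mu_{i,j}\gamma_jq^j\big)^2$.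 $C:=A\exp\big(-\frac k\sigma\big(c(1-\varpi)-\frac\varpi\eta\log\big(\frac{k\varpi}{k\varpi+\eta\sigma}\mathrm{Card}(\mathcal G)(1+\eta\sigma\sum_i\frac1{k\varpi+\sigma\gamma_i})\big)+\varpi\sum_i\gamma_i^{-1}\log(1+\frac{\sigma\gamma_i}{k\varpi})\big)\big)\cdot\frac{\sigma\eta}{k\varpi+\sigma\eta}\big(1+\eta\sigma\sum_i\frac1{k\varpi+\sigma\gamma_i}\big)$. *)

theory Defs
  imports "HOL-Analysis.Analysis"
begin

datatype side = Side_a | Side_b

fun phi :: "side \<Rightarrow> int" where
  "phi Side_a = 1"
| "phi Side_b = -1"

definition Qset :: "nat \<Rightarrow> nat \<Rightarrow> (nat \<Rightarrow> int) set" where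
  "Qset N qbar = {q. (\<forall>i<N. - int qbar \<le> q i \<and> q i \<le> int qbar) \<and> (\<forall>i. N \<le> i \<longrightarrow> q i = 0)}"

definition ominus :: "(nat \<Rightarrow> int) \<Rightarrow> nat \<Rightarrow> int \<Rightarrow> (nat \<Rightarrow> int)" where
  "ominus q i x = q(i := q i - x)"

definition Gset :: "nat \<Rightarrow> (nat \<Rightarrow> real) \<Rightarrow> nat set" where
  "Gset N gamma = {i. i < N \<and> gamma i = Max (gamma ` {..<N})}"

definition kappa :: "nat \<Rightarrow> (nat \<Rightarrow> real) \<Rightarrow> real \<Rightarrow> real" where
  "kappa N gamma eta = 1 / ((\<Prod>i<N. gamma i) + eta * (\<Sum>j<N. \<Prod>m\<in>{..<N} - {j}. gamma m))"

definition mu :: "nat \<Rightarrow> (nat \<Rightarrow> real) \<Rightarrow> real \<Rightarrow> nat \<Rightarrow> nat \<Rightarrow> real" where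
  "mu N gamma eta i j =
     (if i \<noteq> j then - eta * kappa N gamma eta * (\<Prod>m\<in>{..<N} - {i, j}. gamma m)
      else kappa N gamma eta * ((\<Prod>j\<in>{..<N} - {i}. gamma j)
             + eta * (\<Sum>j\<in>{..<N} - {i}. \<Prod>m\<in>{..<N} - {i, j}. gamma m)))"

definition CS :: "nat \<Rightarrow> (nat \<Rightarrow> real) \<Rightarrow> real \<Rightarrow> real \<Rightarrow> (nat \<Rightarrow> int) \<Rightarrow> real" where
  "CS N gamma eta sig q =
     (\<Sum>i<N. eta / 2 * sig^2 * gamma i *
        (real_of_int (q i) - (\<Sum>j<N. mu N gamma eta i j * gamma j * real_of_int (q j)))^2)
     + eta^2 * sig^2 / 2 *
        (\<Sum>i<N. \<Sum>j<N. mu N gamma eta i j * gamma j * real_of_int (q j))^2"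

definition Cconst :: "nat \<Rightarrow> (nat \<Rightarrow> real) \<Rightarrow> real \<Rightarrow> real \<Rightarrow> real \<Rightarrow> real \<Rightarrow> real \<Rightarrow> real \<Rightarrow> real" where
  "Cconst N gamma A k sig c varpi eta =
     (let S = 1 + eta * sig * (\<Sum>i<N. 1 / (k * varpi + sig * gamma i)) in
      A * exp (- (k / sig) *
          (c * (1 - varpi)
           - varpi / eta * ln (k * varpi / (k * varpi + eta * sig) * real (card (Gset N gamma)) * S)
           + varpi * (\<Sum>i<N. (1 / gamma i) * ln (1 + sig * gamma i / (k * varpi)))))
        * (sig * eta / (k * varpi + sig * eta)) * S)"

definition active :: "nat \<Rightarrow> nat \<Rightarrow> (nat \<Rightarrow> real) \<Rightarrow> (nat \<Rightarrow> int) \<Rightarrow> side \<Rightarrow> nat set" where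
  "active N qbar gamma q j = {i \<in> Gset N gamma. phi j * q i > - int qbar}"

definition denom :: "nat \<Rightarrow> nat \<Rightarrow> (nat \<Rightarrow> real) \<Rightarrow> (real \<Rightarrow> (nat \<Rightarrow> int) \<Rightarrow> real)
                      \<Rightarrow> real \<Rightarrow> (nat \<Rightarrow> int) \<Rightarrow> side \<Rightarrow> real" where
  "denom N qbar gamma v t q j =
     (\<Sum>i\<in>Gset N gamma. v t (ominus q i (phi j)) * (if phi j * q i > - int qbar then 1 else 0))"

definition jterm :: "nat \<Rightarrow> nat \<Rightarrow> (nat \<Rightarrow> real) \<Rightarrow> real \<Rightarrow> (real \<Rightarrow> (nat \<Rightarrow> int) \<Rightarrow> real)
                      \<Rightarrow> real \<Rightarrow> (nat \<Rightarrow> int) \<Rightarrow> side \<Rightarrow> real" where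
  "jterm N qbar gamma p v t q j =
     (if active N qbar gamma q j = {} then 0
      else (v t q / denom N qbar gamma v t q j) powr p)"

text \<open>The power x^p (p = k varpi/(sig eta) real) is only meaningful for x >= 0 and the quotient
  only for a nonzero denominator; a solution is required to keep the equation well defined.\<close>
definition well_defined :: "nat \<Rightarrow> nat \<Rightarrow> (nat \<Rightarrow> real) \<Rightarrow> (real \<Rightarrow> (nat \<Rightarrow> int) \<Rightarrow> real)
                      \<Rightarrow> real \<Rightarrow> (nat \<Rightarrow> int) \<Rightarrow> bool" where
  "well_defined N qbar gamma v t q \<longleftrightarrow>
     (\<forall>j. active N qbar gamma q j \<noteq> {} \<longrightarrow>
          denom N qbar gamma v t q j \<noteq> 0 \<and> v t q / denom N qbar gamma v t q j \<ge> 0)"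

definition is_solution ::
  "nat \<Rightarrow> nat \<Rightarrow> real \<Rightarrow> real \<Rightarrow> real \<Rightarrow> real \<Rightarrow> real \<Rightarrow> real \<Rightarrow> real \<Rightarrow> (nat \<Rightarrow> real)
    \<Rightarrow> (real \<Rightarrow> (nat \<Rightarrow> int) \<Rightarrow> real) \<Rightarrow> bool" where
  "is_solution N qbar T A k sig c varpi eta gamma v \<longleftrightarrow>
     (\<forall>q\<in>Qset N qbar.
        continuous_on {0..T} (\<lambda>t. v t q)
      \<and> v T q = -1
      \<and> (\<forall>t\<in>{0..<T}. well_defined N qbar gamma v t q
          \<and> ((\<lambda>s. v s q) has_real_derivative
               (- v t q * CS N gamma eta sig q
                + v t q * Cconst N gamma A k sig c varpi eta *
                  (\<Sum>j\<in>{Side_a, Side_b}. jterm N qbar gamma (k * varpi / (sig * eta)) v t q j)))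
             (at t within {0..T})))"

definition bounded_on :: "nat \<Rightarrow> nat \<Rightarrow> real \<Rightarrow> (real \<Rightarrow> (nat \<Rightarrow> int) \<Rightarrow> real) \<Rightarrow> bool" where
  "bounded_on N qbar T v \<longleftrightarrow> (\<exists>M. \<forall>t\<in>{0..T}. \<forall>q\<in>Qset N qbar. \<bar>v t q\<bar> \<le> M)"

end

theory Submission
  imports Defs
begin

text \<open>The nonlinearity only makes sense while \<open>v\<close> stays negative, so we first replace it by a
  truncated field that is bounded and globally Lipschitz; for that finite system Picard iteration
  gives existence and a Gronwall-type iteration gives uniqueness. A minimum principle (at the last
  time a comparison function vanishes, its derivative cannot be negative) shows that every solution
  of either system satisfies \<open>-exp (B (T - t)) \<le> v \<le> -exp (-2 C (T - t))\<close>, where \<open>B\<close> bounds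
  \<open>C\<^sup>S\<close>: all jump terms are nonnegative, and at a maximal negative component each of them is at
  most 1. In this range the truncation is inactive, so the two systems have the same solutions.\<close>

section \<open>A minimum principle for finite systems\<close>

lemma deriv_nonneg_if_ge_on_right:
  fixes f :: "real \<Rightarrow> real"
  assumes f': "(f has_real_derivative D) (at t within {a..b})"
    and t: "a \<le> t" "t < b" and ge: "\<And>s. t < s \<Longrightarrow> s \<le> b \<Longrightarrow> f t \<le> f s"
  shows "D \<ge> 0"
proof -
  have "((\<lambda>s. (f s - f t) / (s - t)) \<longlongrightarrow> D) (at t within {a..b})"
    using f' by (simp add: has_field_derivative_iff)
  hence "((\<lambda>s. (f s - f t) / (s - t)) \<longlongrightarrow> D) (at t within {t..b})"
    by (rule tendsto_within_subset) (use t in auto)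
  hence "((\<lambda>s. (f s - f t) / (s - t)) \<longlongrightarrow> D) (at_right t)"
    using at_within_Icc_at_right[OF \<open>t < b\<close>] by simp
  moreover have "eventually (\<lambda>s. 0 \<le> (f s - f t) / (s - t)) (at_right t)"
    unfolding eventually_at_right[OF \<open>t < b\<close>] using ge t by (intro exI[of _ b]) auto
  ultimately show ?thesis by (rule tendsto_lowerbound) simp
qed

lemma ge_by_right_continuity:
  fixes f :: "real \<Rightarrow> real"
  assumes "continuous_on {a..b} f" "a \<le> t" "t < b" and ge: "\<And>s. t < s \<Longrightarrow> s \<le> b \<Longrightarrow> c \<le> f s"
  shows "c \<le> f t"
proof -
  have "(f \<longlongrightarrow> f t) (at t within {a..b})"
    using assms by (auto simp: continuous_on_def)
  hence "(f \<longlongrightarrow> f t) (at t within {t..b})"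
    by (rule tendsto_within_subset) (use assms in auto)
  hence "(f \<longlongrightarrow> f t) (at_right t)"
    using at_within_Icc_at_right[OF \<open>t < b\<close>] by simp
  moreover have "eventually (\<lambda>s. c \<le> f s) (at_right t)"
    unfolding eventually_at_right[OF \<open>t < b\<close>] using ge assms(3) by (intro exI[of _ b]) auto
  ultimately show ?thesis by (rule tendsto_lowerbound) simp
qed

lemma positive_by_first_zero:
  fixes h Dh :: "real \<Rightarrow> 'q \<Rightarrow> real"
  assumes fin: "finite Q"
    and cont: "\<And>q. q \<in> Q \<Longrightarrow> continuous_on {0..T} (\<lambda>t. h t q)"
    and terminal: "\<And>q. q \<in> Q \<Longrightarrow> h T q > 0"
    and h': "\<And>q t. q \<in> Q \<Longrightarrow> t \<in> {0..<T} \<Longrightarrow> ((\<lambda>t. h t q) has_real_derivative Dh t q) (at t within {0..T})"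
    and decr: "\<And>q t. q \<in> Q \<Longrightarrow> t \<in> {0..<T} \<Longrightarrow> h t q = 0 \<Longrightarrow> (\<forall>q'\<in>Q. h t q' \<ge> 0) \<Longrightarrow> Dh t q < 0"
    and q: "q \<in> Q" and t: "t \<in> {0..T}"
  shows "h t q > 0"
proof (rule ccontr)
  assume "\<not> h t q > 0"
  define S where "S = {s\<in>{0..T}. \<exists>q\<in>Q. h s q \<le> 0}"
  have "S \<noteq> {}" using \<open>\<not> h t q > 0\<close> q t unfolding S_def by force
  have S_eq: "S = (\<Union>q\<in>Q. {0..T} \<inter> (\<lambda>s. h s q) -` {..0})" by (auto simp: S_def)
  have "closed S" unfolding S_eq
    using fin cont by (intro closed_UN ballI continuous_closed_preimage) auto
  have bdd: "bdd_above S" by (auto simp: S_def bdd_above_def)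
  define z where "z = Sup S"
  have "z \<in> S" unfolding z_def by (rule closed_contains_Sup) fact+
  then obtain p where p: "p \<in> Q" "h z p \<le> 0" and z: "0 \<le> z" "z \<le> T" by (auto simp: S_def)
  have "z < T" using p terminal[of p] z by (cases "z = T") auto
  have after: "h s q' > 0" if "q' \<in> Q" "z < s" "s \<le> T" for q' s
  proof -
    have "s \<notin> S" using cSup_upper[OF _ bdd, of s] that by (auto simp: z_def)
    thus ?thesis using that z by (auto simp: S_def not_le)
  qed
  have nonneg: "\<forall>q'\<in>Q. h z q' \<ge> 0"
  proof
    fix q' assume "q' \<in> Q"
    show "0 \<le> h z q'"
      by (rule ge_by_right_continuity[OF cont[OF \<open>q' \<in> Q\<close>] \<open>0 \<le> z\<close> \<open>z < T\<close>])
         (use after \<open>q' \<in> Q\<close> in \<open>simp add: less_imp_le\<close>)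
  qed
  hence "h z p = 0" using p by force
  have "Dh z p \<ge> 0"
    using deriv_nonneg_if_ge_on_right[OF h'[of p z] \<open>0 \<le> z\<close> \<open>z < T\<close>] p \<open>h z p = 0\<close> after z \<open>z < T\<close>
    by (simp add: less_imp_le)
  moreover have "Dh z p < 0" using decr p \<open>h z p = 0\<close> nonneg z \<open>z < T\<close> by auto
  ultimately show False by simp
qed

lemma nonneg_by_minimum_principle:
  fixes h Dh :: "real \<Rightarrow> 'q \<Rightarrow> real"
  assumes fin: "finite Q" and "T \<ge> 0" and "\<delta> > 0"
    and cont: "\<And>q. q \<in> Q \<Longrightarrow> continuous_on {0..T} (\<lambda>t. h t q)"
    and terminal: "\<And>q. q \<in> Q \<Longrightarrow> h T q \<ge> 0"
    and h': "\<And>q t. q \<in> Q \<Longrightarrow> t \<in> {0..<T} \<Longrightarrow> ((\<lambda>t. h t q) has_real_derivative Dh t q) (at t within {0..T})"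
    and min: "\<And>q t. q \<in> Q \<Longrightarrow> t \<in> {0..<T} \<Longrightarrow> - \<delta> < h t q \<Longrightarrow> h t q < 0 \<Longrightarrow>
                (\<forall>q'\<in>Q. h t q \<le> h t q') \<Longrightarrow> Dh t q \<le> 0"
    and q: "q \<in> Q" and t: "t \<in> {0..T}"
  shows "h t q \<ge> 0"
proof -
  \<comment> \<open>Adding \<open>\<epsilon> (1 + T - t)\<close> makes the sign condition on the derivative strict; then \<open>\<epsilon> \<rightarrow> 0\<close>.\<close>
  have perturbed: "- (\<epsilon> * (1 + T - t)) < h t q" if \<epsilon>: "\<epsilon> \<in> {0<..<\<delta> / (1 + T)}" for \<epsilon>
  proof -
    have small: "\<epsilon> * (1 + T - s) < \<delta>" if "s \<in> {0..T}" for s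
    proof -
      have "\<epsilon> * (1 + T - s) \<le> \<epsilon> * (1 + T)" using \<epsilon> that by (intro mult_left_mono) auto
      also have "\<dots> < \<delta>" using \<epsilon> \<open>T \<ge> 0\<close> by (simp add: pos_less_divide_eq)
      finally show ?thesis .
    qed
    have "0 < h t q + \<epsilon> * (1 + T - t)"
    proof (rule positive_by_first_zero[OF fin,
          where h="\<lambda>s q. h s q + \<epsilon> * (1 + T - s)" and Dh="\<lambda>s q. Dh s q - \<epsilon>"])
      fix p s assume p: "p \<in> Q" and s: "s \<in> {0..<T}"
      show "((\<lambda>s. h s p + \<epsilon> * (1 + T - s)) has_real_derivative Dh s p - \<epsilon>) (at s within {0..T})"
        by (rule derivative_eq_intros h'[OF p s] refl)+ simp
      assume zero: "h s p + \<epsilon> * (1 + T - s) = 0" and "\<forall>q'\<in>Q. 0 \<le> h s q' + \<epsilon> * (1 + T - s)"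
      hence "\<forall>q'\<in>Q. h s p \<le> h s q'" by auto
      moreover have "0 < \<epsilon> * (1 + T - s)" using \<epsilon> s by simp
      ultimately show "Dh s p - \<epsilon> < 0"
        using min[OF p s] small[of s] zero \<epsilon> s by force
    qed (use cont terminal \<epsilon> q t in \<open>auto intro!: continuous_intros add_nonneg_pos\<close>)
    thus ?thesis by simp
  qed
  have "((\<lambda>\<epsilon>. - (\<epsilon> * (1 + T - t))) \<longlongrightarrow> 0) (at_right 0)"
    by (auto intro!: tendsto_eq_intros)
  moreover have "eventually (\<lambda>\<epsilon>. - (\<epsilon> * (1 + T - t)) \<le> h t q) (at_right 0)"
    using perturbed \<open>\<delta> > 0\<close> \<open>T \<ge> 0\<close> by (intro eventually_at_rightI[of 0 "\<delta> / (1 + T)"]) (auto simp: less_imp_le)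
  ultimately show ?thesis by (rule tendsto_upperbound) simp
qed

lemma lower_exp_bound:
  fixes X D G :: "real \<Rightarrow> 'q \<Rightarrow> real"
  assumes fin: "finite Q" and "T \<ge> 0" "B \<ge> 0"
    and cont: "\<And>q. q \<in> Q \<Longrightarrow> continuous_on {0..T} (\<lambda>t. X t q)"
    and terminal: "\<And>q. q \<in> Q \<Longrightarrow> X T q = -1"
    and X': "\<And>q t. q \<in> Q \<Longrightarrow> t \<in> {0..<T} \<Longrightarrow> ((\<lambda>t. X t q) has_real_derivative D t q) (at t within {0..T})"
    and rate: "\<And>q t. q \<in> Q \<Longrightarrow> t \<in> {0..<T} \<Longrightarrow> \<bar>X t q\<bar> \<le> R \<Longrightarrow> D t q = X t q * G t q"
    and R: "exp (B * T) < R"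
    and G_ge: "\<And>q t. q \<in> Q \<Longrightarrow> t \<in> {0..<T} \<Longrightarrow> - B \<le> G t q"
    and q: "q \<in> Q" and t: "t \<in> {0..T}"
  shows "- exp (B * (T - t)) \<le> X t q"
proof -
  define F where "F = (\<lambda>s. exp (- (B * (T - s))))"
  define \<delta> where "\<delta> = R / exp (B * T) - 1"
  have "0 \<le> F t * X t q + 1"
  proof (rule nonneg_by_minimum_principle[OF fin \<open>T \<ge> 0\<close>, where \<delta>=\<delta>
        and h="\<lambda>s q. F s * X s q + 1" and Dh="\<lambda>s q. F s * (B * X s q + D s q)"])
    show "\<delta> > 0" using R by (simp add: \<delta>_def)
    fix p s assume p: "p \<in> Q" and s: "s \<in> {0..<T}"
    show "((\<lambda>s. F s * X s p + 1) has_real_derivative F s * (B * X s p + D s p)) (at s within {0..T})"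
      unfolding F_def by (rule derivative_eq_intros X'[OF p s] refl)+ (simp add: algebra_simps)
    assume lo: "- \<delta> < F s * X s p + 1" and neg: "F s * X s p + 1 < 0"
    have "F s > 0" by (simp add: F_def)
    have "X s p < 0"
    proof (rule ccontr)
      assume "\<not> X s p < 0"
      hence "0 \<le> F s * X s p" using \<open>F s > 0\<close> by simp
      thus False using neg by linarith
    qed
    have "\<bar>X s p\<bar> \<le> R"
    proof -
      have "- X s p * F s < 1 + \<delta>" using lo by (simp add: algebra_simps)
      hence "- X s p < (1 + \<delta>) / F s" using \<open>F s > 0\<close> by (simp add: pos_less_divide_eq)
      also have "\<dots> = (1 + \<delta>) * exp (B * (T - s))" by (simp add: F_def exp_minus divide_inverse)
      also have "\<dots> \<le> (1 + \<delta>) * exp (B * T)"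
        using R \<open>B \<ge> 0\<close> s less_trans[OF exp_gt_zero R]
        by (intro mult_left_mono) (auto simp: \<delta>_def mult_left_mono)
      also have "\<dots> = R" by (simp add: \<delta>_def)
      finally show ?thesis using \<open>X s p < 0\<close> by simp
    qed
    hence "F s * (B * X s p + D s p) = F s * X s p * (B + G s p)"
      using rate[OF p s] by (simp add: algebra_simps)
    also have "\<dots> \<le> 0"
      by (rule mult_nonpos_nonneg) (use mult_pos_neg[OF \<open>F s > 0\<close> \<open>X s p < 0\<close>] G_ge[OF p s] in auto)
    finally show "F s * (B * X s p + D s p) \<le> 0" .
  qed (use q t terminal in \<open>simp_all add: F_def cont continuous_intros\<close>)
  hence "-1 * exp (B * (T - t)) \<le> (F t * X t q) * exp (B * (T - t))"
    by (intro mult_right_mono) auto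
  moreover have "F t * exp (B * (T - t)) = 1" by (simp add: F_def flip: exp_add)
  ultimately show ?thesis by (simp add: mult.assoc mult.left_commute[of _ "X t q"])
qed

lemma upper_exp_bound:
  fixes X D G :: "real \<Rightarrow> 'q \<Rightarrow> real"
  assumes fin: "finite Q" and "T \<ge> 0" "C \<ge> 0"
    and cont: "\<And>q. q \<in> Q \<Longrightarrow> continuous_on {0..T} (\<lambda>t. X t q)"
    and terminal: "\<And>q. q \<in> Q \<Longrightarrow> X T q = -1"
    and X': "\<And>q t. q \<in> Q \<Longrightarrow> t \<in> {0..<T} \<Longrightarrow> ((\<lambda>t. X t q) has_real_derivative D t q) (at t within {0..T})"
    and rate: "\<And>q t. q \<in> Q \<Longrightarrow> t \<in> {0..<T} \<Longrightarrow> \<bar>X t q\<bar> \<le> R \<Longrightarrow> D t q = X t q * G t q"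
    and R: "1 \<le> R"
    and G_le: "\<And>q t. q \<in> Q \<Longrightarrow> t \<in> {0..<T} \<Longrightarrow> X t q < 0 \<Longrightarrow> \<forall>q'\<in>Q. X t q' \<le> X t q \<Longrightarrow> G t q \<le> C"
    and q: "q \<in> Q" and t: "t \<in> {0..T}"
  shows "X t q \<le> - exp (- (C * (T - t)))"
proof -
  define E where "E = (\<lambda>s. exp (C * (T - s)))"
  have "0 \<le> - E t * X t q - 1"
  proof (rule nonneg_by_minimum_principle[OF fin \<open>T \<ge> 0\<close>, where \<delta>=1
        and h="\<lambda>s q. - E s * X s q - 1" and Dh="\<lambda>s q. E s * (C * X s q - D s q)"])
    fix p s assume p: "p \<in> Q" and s: "s \<in> {0..<T}"
    show "((\<lambda>s. - E s * X s p - 1) has_real_derivative E s * (C * X s p - D s p)) (at s within {0..T})"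
      unfolding E_def by (rule derivative_eq_intros X'[OF p s] refl)+ (simp add: algebra_simps)
    assume lo: "- 1 < - E s * X s p - 1" and neg: "- E s * X s p - 1 < 0"
      and min: "\<forall>q'\<in>Q. - E s * X s p - 1 \<le> - E s * X s q' - 1"
    have "E s \<ge> 1" using \<open>C \<ge> 0\<close> s by (simp add: E_def)
    have "X s p < 0"
    proof (rule ccontr)
      assume "\<not> X s p < 0"
      hence "0 \<le> E s * X s p" using \<open>E s \<ge> 1\<close> by simp
      thus False using lo by linarith
    qed
    have "\<bar>X s p\<bar> \<le> R"
    proof -
      have "E s * X s p \<le> 1 * X s p" by (rule mult_right_mono_neg) (use \<open>X s p < 0\<close> \<open>E s \<ge> 1\<close> in auto)
      thus ?thesis using neg R abs_of_neg[OF \<open>X s p < 0\<close>] by linarith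
    qed
    moreover have "\<forall>q'\<in>Q. X s q' \<le> X s p" using min \<open>E s \<ge> 1\<close> by simp
    ultimately have "D s p = X s p * G s p" and "G s p \<le> C"
      using rate[OF p s] G_le[OF p s \<open>X s p < 0\<close>] by auto
    hence "E s * (C * X s p - D s p) = (E s * X s p) * (C - G s p)" by (simp add: algebra_simps)
    also have "\<dots> \<le> 0"
      by (rule mult_nonpos_nonneg) (use \<open>X s p < 0\<close> \<open>E s \<ge> 1\<close> \<open>G s p \<le> C\<close> in \<open>auto simp: mult_nonneg_nonpos\<close>)
    finally show "E s * (C * X s p - D s p) \<le> 0" .
  qed (use q t terminal in \<open>simp_all add: E_def cont continuous_intros\<close>)
  hence "1 \<le> E t * - X t q" by simp
  have "E t * exp (- (C * (T - t))) = 1" by (simp add: E_def flip: exp_add)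
  have "exp (- (C * (T - t))) * 1 \<le> exp (- (C * (T - t))) * (E t * - X t q)"
    by (rule mult_left_mono) (use \<open>1 \<le> E t * - X t q\<close> in auto)
  also have "\<dots> = - X t q" using \<open>E t * exp _ = 1\<close> by (simp add: algebra_simps)
  finally show ?thesis by simp
qed

section \<open>Backward integral equations with a Lipschitz field\<close>

lemma integral_tail_has_real_derivative:
  fixes f :: "real \<Rightarrow> real"
  assumes f: "continuous_on {a..b} f" and t: "t \<in> {a..b}"
  shows "((\<lambda>t. integral {t..b} f) has_real_derivative - f t) (at t within {a..b})"
proof (rule has_field_derivative_transform_within[where d=1, OF _ _ t])
  show "((\<lambda>t. integral {a..b} f - integral {a..t} f) has_real_derivative - f t) (at t within {a..b})"
    using integral_has_real_derivative[OF f t] by (auto intro!: derivative_eq_intros)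
  fix x assume "x \<in> {a..b}"
  thus "integral {a..b} f - integral {a..x} f = integral {x..b} f"
    using Henstock_Kurzweil_Integration.integral_combine[of a x b f] integrable_continuous_interval[OF f]
    by auto
qed simp

lemma integral_power_tail:
  fixes t T :: real
  assumes "t \<le> T"
  shows "integral {t..T} (\<lambda>s. (T - s) ^ n) = (T - t) ^ Suc n / Suc n"
proof -
  define G where "G s = - ((T - s) ^ Suc n) / Suc n" for s
  have "((\<lambda>s. (T - s) ^ n) has_integral (G T - G t)) {t..T}"
  proof (rule fundamental_theorem_of_calculus[OF assms])
    fix x assume "x \<in> {t..T}"
    show "(G has_vector_derivative (T - x) ^ n) (at x within {t..T})"
      unfolding has_real_derivative_iff_has_vector_derivative[symmetric] G_def
      by (rule derivative_eq_intros refl)+ (auto simp: divide_simps)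
  qed
  thus ?thesis by (simp add: integral_unique G_def)
qed

lemma power_div_fact_LIMSEQ_zero:
  fixes A c :: real
  shows "(\<lambda>n. A * c ^ n / fact n) \<longlonglongrightarrow> 0"
proof -
  have "(\<lambda>n. inverse (fact n) * c ^ n) \<longlonglongrightarrow> 0"
    by (rule summable_LIMSEQ_zero[OF summable_exp])
  from tendsto_mult_right_zero[OF this, of A] show ?thesis by (simp add: field_simps)
qed

definition l1_dist :: "'q set \<Rightarrow> ('q \<Rightarrow> real) \<Rightarrow> ('q \<Rightarrow> real) \<Rightarrow> real" where
  "l1_dist Q x y = (\<Sum>q\<in>Q. \<bar>x q - y q\<bar>)"

lemma l1_dist_nonneg: "l1_dist Q x y \<ge> 0"
  unfolding l1_dist_def by (intro sum_nonneg) auto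

lemma abs_le_l1_dist: "finite Q \<Longrightarrow> q \<in> Q \<Longrightarrow> \<bar>x q - y q\<bar> \<le> l1_dist Q x y"
  unfolding l1_dist_def by (rule member_le_sum) auto

locale lipschitz_field =
  fixes Q :: "'q set" and F :: "'q \<Rightarrow> ('q \<Rightarrow> real) \<Rightarrow> real" and L K T :: real and xT :: "'q \<Rightarrow> real"
  assumes finite_Q: "finite Q"
    and lipschitz: "\<And>q x y. q \<in> Q \<Longrightarrow> \<bar>F q x - F q y\<bar> \<le> L * l1_dist Q x y"
    and bounded: "\<And>q x. q \<in> Q \<Longrightarrow> \<bar>F q x\<bar> \<le> K"
    and nonneg: "L \<ge> 0" "K \<ge> 0" "T \<ge> 0"
begin

definition picard_map :: "(real \<Rightarrow> 'q \<Rightarrow> real) \<Rightarrow> real \<Rightarrow> 'q \<Rightarrow> real" where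
  "picard_map X t q = xT q - integral {t..T} (\<lambda>s. F q (X s))"

definition continuous_path :: "(real \<Rightarrow> 'q \<Rightarrow> real) \<Rightarrow> bool" where
  "continuous_path X \<longleftrightarrow> (\<forall>q\<in>Q. continuous_on {0..T} (\<lambda>t. X t q))"

definition integral_solution :: "(real \<Rightarrow> 'q \<Rightarrow> real) \<Rightarrow> bool" where
  "integral_solution X \<longleftrightarrow> continuous_path X \<and> (\<forall>q\<in>Q. \<forall>t\<in>{0..T}. X t q = picard_map X t q)"

lemma continuous_on_field:
  assumes q: "q \<in> Q" and X: "\<And>q'. q' \<in> Q \<Longrightarrow> continuous_on S (\<lambda>s. X s q')"
  shows "continuous_on S (\<lambda>s. F q (X s))"
  unfolding continuous_on_def
proof
  fix s0 assume "s0 \<in> S"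
  have "((\<lambda>s. L * (\<Sum>q'\<in>Q. \<bar>X s q' - X s0 q'\<bar>)) \<longlongrightarrow> L * (\<Sum>q'\<in>Q. \<bar>X s0 q' - X s0 q'\<bar>)) (at s0 within S)"
    using X \<open>s0 \<in> S\<close> unfolding continuous_on_def by (intro tendsto_intros) auto
  hence "((\<lambda>s. L * l1_dist Q (X s) (X s0)) \<longlongrightarrow> 0) (at s0 within S)"
    by (simp add: l1_dist_def)
  moreover have "\<forall>\<^sub>F s in at s0 within S. norm (F q (X s) - F q (X s0)) \<le> L * l1_dist Q (X s) (X s0)"
    using lipschitz[OF q] by simp
  ultimately have "((\<lambda>s. F q (X s) - F q (X s0)) \<longlongrightarrow> 0) (at s0 within S)"
    by (rule Lim_null_comparison[rotated])
  thus "((\<lambda>s. F q (X s)) \<longlongrightarrow> F q (X s0)) (at s0 within S)"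
    by (simp add: Lim_null[of _ "F q (X s0)"])
qed

lemma continuous_on_field_tail:
  assumes "q \<in> Q" "continuous_path X" "t \<in> {0..T}"
  shows "continuous_on {t..T} (\<lambda>s. F q (X s))"
proof (rule continuous_on_field[OF \<open>q \<in> Q\<close>])
  fix q' assume "q' \<in> Q"
  thus "continuous_on {t..T} (\<lambda>s. X s q')"
    using assms by (auto simp: continuous_path_def intro: continuous_on_subset[of "{0..T}"])
qed

lemma integral_field_bound:
  assumes "q \<in> Q" "continuous_path X" "t \<in> {0..T}"
  shows "\<bar>integral {t..T} (\<lambda>s. F q (X s))\<bar> \<le> K * (T - t)"
proof -
  have "norm (integral {t..T} (\<lambda>s. F q (X s))) \<le> integral {t..T} (\<lambda>s. K)"
    by (rule integral_norm_bound_integral)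
       (use bounded[OF \<open>q \<in> Q\<close>] integrable_continuous_interval[OF continuous_on_field_tail[OF assms]] in auto)
  thus ?thesis using assms by (simp add: mult.commute)
qed

lemma picard_map_has_real_derivative:
  assumes "continuous_path X" "q \<in> Q" "t \<in> {0..T}"
  shows "((\<lambda>t. picard_map X t q) has_real_derivative F q (X t)) (at t within {0..T})"
proof -
  have "continuous_on {0..T} (\<lambda>s. F q (X s))"
    using assms continuous_on_field_tail[of q X 0] nonneg(3) by simp
  from integral_tail_has_real_derivative[OF this \<open>t \<in> {0..T}\<close>] show ?thesis
    unfolding picard_map_def by (auto intro!: derivative_eq_intros)
qed

lemma continuous_path_picard_map:
  assumes "continuous_path X"
  shows "continuous_path (picard_map X)"
  unfolding continuous_path_def
  using DERIV_continuous_on[OF picard_map_has_real_derivative[OF assms]] by blast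

lemma picard_map_minus_terminal:
  assumes "q \<in> Q" "continuous_path X" "t \<in> {0..T}"
  shows "\<bar>picard_map X t q - xT q\<bar> \<le> K * T"
proof -
  have "\<bar>picard_map X t q - xT q\<bar> \<le> K * (T - t)"
    using integral_field_bound[OF assms] by (simp add: picard_map_def)
  also have "\<dots> \<le> K * T" using assms(3) nonneg by (simp add: mult_left_mono)
  finally show ?thesis .
qed

lemma picard_map_dist_bound:
  assumes X: "continuous_path X" and Y: "continuous_path Y" and t: "t \<in> {0..T}"
    and bound: "\<And>s. s \<in> {t..T} \<Longrightarrow> l1_dist Q (X s) (Y s) \<le> A * (card Q * L * (T - s)) ^ n / fact n"
  shows "l1_dist Q (picard_map X t) (picard_map Y t) \<le> A * (card Q * L * (T - t)) ^ Suc n / fact (Suc n)"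
proof -
  define B where "B = A * (card Q * L) ^ n / fact n"
  have "\<bar>picard_map X t q - picard_map Y t q\<bar> \<le> L * B * ((T - t) ^ Suc n / Suc n)" if q: "q \<in> Q" for q
  proof -
    have "picard_map X t q - picard_map Y t q = - integral {t..T} (\<lambda>s. F q (X s) - F q (Y s))"
      using integrable_continuous_interval[OF continuous_on_field_tail[OF q _ t]] X Y
      by (simp add: picard_map_def integral_diff)
    moreover have "norm (integral {t..T} (\<lambda>s. F q (X s) - F q (Y s)))
        \<le> integral {t..T} (\<lambda>s. L * B * (T - s) ^ n)"
    proof (rule integral_norm_bound_integral)
      show "(\<lambda>s. F q (X s) - F q (Y s)) integrable_on {t..T}"
        by (intro integrable_continuous_interval continuous_intros continuous_on_field_tail q X Y t)
      show "(\<lambda>s. L * B * (T - s) ^ n) integrable_on {t..T}"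
        by (intro integrable_continuous_interval continuous_intros)
      fix s assume s: "s \<in> {t..T}"
      have "norm (F q (X s) - F q (Y s)) \<le> L * l1_dist Q (X s) (Y s)" using lipschitz[OF q] by simp
      also have "\<dots> \<le> L * (B * (T - s) ^ n)"
        using bound[OF s] nonneg(1) by (intro mult_left_mono) (simp_all add: B_def power_mult_distrib)
      finally show "norm (F q (X s) - F q (Y s)) \<le> L * B * (T - s) ^ n" by (simp add: mult.assoc)
    qed
    ultimately have "\<bar>picard_map X t q - picard_map Y t q\<bar> \<le> integral {t..T} (\<lambda>s. L * B * (T - s) ^ n)"
      by simp
    also have "\<dots> = L * B * ((T - t) ^ Suc n / Suc n)"
      using t by (simp add: integral_power_tail)
    finally show ?thesis .
  qed
  hence "l1_dist Q (picard_map X t) (picard_map Y t) \<le> (\<Sum>q\<in>Q. L * B * ((T - t) ^ Suc n / Suc n))"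
    unfolding l1_dist_def by (intro sum_mono)
  also have "\<dots> = A * (card Q * L * (T - t)) ^ Suc n / fact (Suc n)"
    unfolding B_def power_mult_distrib fact_Suc power_Suc by (simp add: field_simps)
  finally show ?thesis .
qed

lemma integral_solution_unique:
  assumes X: "integral_solution X" and Y: "integral_solution Y" and q: "q \<in> Q" and t: "t \<in> {0..T}"
  shows "X t q = Y t q"
proof -
  define A where "A = card Q * (2 * K * T)"
  have cont: "continuous_path X" "continuous_path Y"
    and fixed: "\<And>q s. q \<in> Q \<Longrightarrow> s \<in> {0..T} \<Longrightarrow> X s q = picard_map X s q \<and> Y s q = picard_map Y s q"
    using X Y by (auto simp: integral_solution_def)
  have bound: "l1_dist Q (X s) (Y s) \<le> A * (card Q * L * (T - s)) ^ n / fact n" if "s \<in> {0..T}" for n s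
    using that
  proof (induction n arbitrary: s)
    case 0
    have "\<bar>X s q - Y s q\<bar> \<le> 2 * K * T" if "q \<in> Q" for q
      using picard_map_minus_terminal[OF that cont(1) 0] picard_map_minus_terminal[OF that cont(2) 0]
        fixed[OF that 0] by linarith
    hence "l1_dist Q (X s) (Y s) \<le> (\<Sum>q\<in>Q. 2 * K * T)" unfolding l1_dist_def by (rule sum_mono)
    thus ?case by (simp add: A_def)
  next
    case (Suc n)
    have "l1_dist Q (X s) (Y s) = l1_dist Q (picard_map X s) (picard_map Y s)"
      unfolding l1_dist_def using fixed Suc.prems by (intro sum.cong) auto
    also have "\<dots> \<le> A * (card Q * L * (T - s)) ^ Suc n / fact (Suc n)"
      by (rule picard_map_dist_bound[OF cont Suc.prems]) (use Suc in auto)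
    finally show ?case .
  qed
  have "l1_dist Q (X t) (Y t) \<le> 0"
    by (rule tendsto_lowerbound[OF power_div_fact_LIMSEQ_zero[of A "card Q * L * (T - t)"]]) (use bound t in auto)
  thus ?thesis using abs_le_l1_dist[OF finite_Q q, of "X t" "Y t"] by simp
qed

primrec picard_iter :: "nat \<Rightarrow> real \<Rightarrow> 'q \<Rightarrow> real" where
  "picard_iter 0 = (\<lambda>t q. xT q)"
| "picard_iter (Suc n) = picard_map (picard_iter n)"

lemma continuous_path_picard_iter: "continuous_path (picard_iter n)"
  by (induction n) (simp_all add: continuous_path_picard_map, simp add: continuous_path_def)

lemma picard_iter_step_dist:
  assumes "t \<in> {0..T}"
  shows "l1_dist Q (picard_iter (Suc n) t) (picard_iter n t) \<le> card Q * K * T * (card Q * L * (T - t)) ^ n / fact n"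
  using assms
proof (induction n arbitrary: t)
  case 0
  have "l1_dist Q (picard_iter (Suc 0) t) (picard_iter 0 t) \<le> (\<Sum>q\<in>Q. K * T)"
    unfolding l1_dist_def using picard_map_minus_terminal[OF _ continuous_path_picard_iter[of 0] 0]
    by (intro sum_mono) simp
  thus ?case by simp
next
  case (Suc n)
  have "l1_dist Q (picard_map (picard_iter (Suc n)) t) (picard_map (picard_iter n) t)
      \<le> card Q * K * T * (card Q * L * (T - t)) ^ Suc n / fact (Suc n)"
    by (rule picard_map_dist_bound[OF continuous_path_picard_iter continuous_path_picard_iter Suc.prems])
       (use Suc in auto)
  thus ?case by simp
qed

lemma uniform_limit_field:
  assumes q: "q \<in> Q" and lim: "\<And>q'. q' \<in> Q \<Longrightarrow> uniform_limit S (\<lambda>n s. Xn n s q') (\<lambda>s. X s q') sequentially"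
  shows "uniform_limit S (\<lambda>n s. F q (Xn n s)) (\<lambda>s. F q (X s)) sequentially"
proof (rule uniform_limitI)
  fix e :: real assume "e > 0"
  define e' where "e' = e / (L * card Q + 1)"
  have "L * card Q + 1 > 0" using nonneg(1) by (simp add: add_nonneg_pos)
  hence "e' > 0" using \<open>e > 0\<close> by (simp add: e'_def)
  have "\<forall>\<^sub>F n in sequentially. \<forall>q'\<in>Q. \<forall>s\<in>S. dist (Xn n s q') (X s q') < e'"
    using lim \<open>e' > 0\<close> by (intro eventually_ball_finite[OF finite_Q] ballI uniform_limitD[OF lim])
  thus "\<forall>\<^sub>F n in sequentially. \<forall>s\<in>S. dist (F q (Xn n s)) (F q (X s)) < e"
  proof eventually_elim
    case (elim n)
    show ?case
    proof
      fix s assume "s \<in> S"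
      have "l1_dist Q (Xn n s) (X s) \<le> (\<Sum>q'\<in>Q. e')"
        unfolding l1_dist_def using elim \<open>s \<in> S\<close> by (intro sum_mono) (auto simp: dist_real_def less_imp_le)
      have "dist (F q (Xn n s)) (F q (X s)) \<le> L * l1_dist Q (Xn n s) (X s)"
        using lipschitz[OF q] by (simp add: dist_real_def)
      also have "\<dots> \<le> L * (card Q * e')"
        using mult_left_mono[OF \<open>l1_dist Q (Xn n s) (X s) \<le> _\<close> nonneg(1)] by simp
      also have "\<dots> = e * (L * card Q / (L * card Q + 1))" by (simp add: e'_def field_simps)
      also have "\<dots> < e"
        using \<open>e > 0\<close> \<open>L * card Q + 1 > 0\<close> by (simp add: divide_less_eq mult_less_cancel_left1)
      finally show "dist (F q (Xn n s)) (F q (X s)) < e" .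
    qed
  qed
qed

lemma picard_map_tendsto:
  assumes cont: "\<And>n. continuous_path (Xn n)"
    and lim: "\<And>q'. q' \<in> Q \<Longrightarrow> uniform_limit {0..T} (\<lambda>n t. Xn n t q') (\<lambda>t. X t q') sequentially"
    and q: "q \<in> Q" and t: "t \<in> {0..T}"
  shows "(\<lambda>n. picard_map (Xn n) t q) \<longlonglongrightarrow> picard_map X t q"
proof -
  have cF: "\<And>n. continuous_on {t..T} (\<lambda>s. F q (Xn n s))"
    using continuous_on_field_tail[OF q cont t] .
  have "uniform_limit {t..T} (\<lambda>n s. F q (Xn n s)) (\<lambda>s. F q (X s)) sequentially"
  proof (rule uniform_limit_field[OF q])
    fix q' assume "q' \<in> Q"
    show "uniform_limit {t..T} (\<lambda>n s. Xn n s q') (\<lambda>s. X s q') sequentially"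
      by (rule uniform_limit_on_subset[OF lim[OF \<open>q' \<in> Q\<close>]]) (use t in auto)
  qed
  then obtain I J where I: "\<And>n. ((\<lambda>s. F q (Xn n s)) has_integral I n) {t..T}"
    and J: "((\<lambda>s. F q (X s)) has_integral J) {t..T}" and "I \<longlonglongrightarrow> J"
    by (rule uniform_limit_integral[OF _ cF]) auto
  hence "(\<lambda>n. xT q - I n) \<longlonglongrightarrow> xT q - J" by (intro tendsto_intros)
  moreover have "integral {t..T} (\<lambda>s. F q (Xn n s)) = I n" for n using I by (rule integral_unique)
  ultimately show ?thesis using J by (simp add: picard_map_def integral_unique)
qed

lemma integral_solution_exists: "\<exists>X. integral_solution X"
proof -
  define c where "c = card Q * L * T"
  define A where "A = card Q * K * T"
  define d where "d i t q = picard_iter (Suc i) t q - picard_iter i t q" for i t q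
  have d_le: "\<bar>d i t q\<bar> \<le> A * (inverse (fact i) * c ^ i)" if "q \<in> Q" "t \<in> {0..T}" for i t q
  proof -
    have "\<bar>d i t q\<bar> \<le> l1_dist Q (picard_iter (Suc i) t) (picard_iter i t)"
      unfolding d_def by (rule abs_le_l1_dist[OF finite_Q that(1)])
    also have "\<dots> \<le> A * (card Q * L * (T - t)) ^ i / fact i"
      using picard_iter_step_dist[OF that(2)] by (simp add: A_def)
    also have "\<dots> \<le> A * c ^ i / fact i"
      using that nonneg
      by (intro divide_right_mono mult_left_mono power_mono) (auto simp: A_def c_def intro!: mult_left_mono)
    finally show ?thesis by (simp add: field_simps)
  qed
  define X where "X t q = xT q + (\<Sum>i. d i t q)" for t q
  have lim: "uniform_limit {0..T} (\<lambda>n t. picard_iter n t q) (\<lambda>t. X t q) sequentially" if q: "q \<in> Q" for q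
  proof -
    have "uniform_limit {0..T} (\<lambda>n t. \<Sum>i<n. d i t q) (\<lambda>t. \<Sum>i. d i t q) sequentially"
      by (rule Weierstrass_m_test[OF _ summable_mult[OF summable_exp]]) (use d_le q in auto)
    hence "uniform_limit {0..T} (\<lambda>n t. xT q + (\<Sum>i<n. d i t q)) (\<lambda>t. X t q) sequentially"
      unfolding X_def by (intro uniform_limit_intros)
    moreover have "xT q + (\<Sum>i<n. d i t q) = picard_iter n t q" for n t
      unfolding d_def by (subst sum_lessThan_telescope) simp
    ultimately show ?thesis by simp
  qed
  have "continuous_path X"
    unfolding continuous_path_def
    using uniform_limit_theorem[OF _ lim] continuous_path_picard_iter
    by (auto simp: continuous_path_def)
  moreover have "X t q = picard_map X t q" if q: "q \<in> Q" and t: "t \<in> {0..T}" for q t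
  proof (rule LIMSEQ_unique)
    show "(\<lambda>n. picard_iter (Suc n) t q) \<longlonglongrightarrow> X t q"
      using LIMSEQ_Suc[OF tendsto_uniform_limitI[OF lim[OF q] t]] .
    show "(\<lambda>n. picard_iter (Suc n) t q) \<longlonglongrightarrow> picard_map X t q"
      using picard_map_tendsto[OF continuous_path_picard_iter lim q t] by simp
  qed
  ultimately show ?thesis unfolding integral_solution_def by blast
qed

lemma integral_solution_has_real_derivative:
  assumes X: "integral_solution X" and q: "q \<in> Q" and t: "t \<in> {0..T}"
  shows "((\<lambda>t. X t q) has_real_derivative F q (X t)) (at t within {0..T})"
proof (rule has_field_derivative_transform_within[where d=1, OF _ _ t])
  show "((\<lambda>t. picard_map X t q) has_real_derivative F q (X t)) (at t within {0..T})"
    using X q t by (intro picard_map_has_real_derivative) (auto simp: integral_solution_def)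
qed (use X q in \<open>auto simp: integral_solution_def\<close>)

lemma integral_solution_if_has_real_derivative:
  assumes cont: "continuous_path X" and terminal: "\<And>q. q \<in> Q \<Longrightarrow> X T q = xT q"
    and X': "\<And>q t. q \<in> Q \<Longrightarrow> t \<in> {0..<T} \<Longrightarrow> ((\<lambda>t. X t q) has_real_derivative F q (X t)) (at t within {0..T})"
  shows "integral_solution X"
  unfolding integral_solution_def
proof (intro conjI cont ballI)
  fix q t assume q: "q \<in> Q" and t: "t \<in> {0..T}"
  have "((\<lambda>s. F q (X s)) has_integral (X T q - X t q)) {t..T}"
  proof (rule fundamental_theorem_of_calculus_interior)
    show "t \<le> T" "continuous_on {t..T} (\<lambda>s. X s q)"
      using cont q t by (auto simp: continuous_path_def intro: continuous_on_subset[of "{0..T}"])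
    fix s assume s: "s \<in> {t<..<T}"
    have "at s within {0..T} = at s" using s t by (intro at_within_interior) auto
    moreover have "((\<lambda>s. X s q) has_real_derivative F q (X s)) (at s within {0..T})"
      using X'[OF q] s t by simp
    ultimately show "((\<lambda>s. X s q) has_vector_derivative F q (X s)) (at s)"
      by (simp add: has_real_derivative_iff_has_vector_derivative)
  qed
  thus "X t q = picard_map X t q"
    using terminal[OF q] by (simp add: picard_map_def integral_unique)
qed

end

lemma powr_lipschitz_on_interval:
  fixes a b x y p :: real
  assumes "0 < a" "x \<in> {a..b}" "y \<in> {a..b}"
  shows "\<bar>x powr p - y powr p\<bar> \<le> \<bar>p\<bar> * (a powr (p - 1) + b powr (p - 1)) * \<bar>x - y\<bar>"
proof -
  have "norm (x powr p - y powr p) \<le> \<bar>p\<bar> * (a powr (p - 1) + b powr (p - 1)) * norm (x - y)"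
  proof (rule field_differentiable_bound[where f'="\<lambda>z. p * z powr (p - 1)"])
    fix z assume z: "z \<in> {a..b}"
    show "((\<lambda>z. z powr p) has_field_derivative p * z powr (p - 1)) (at z within {a..b})"
      using z assms(1) by (auto intro!: has_field_derivative_at_within[OF has_real_derivative_powr])
    have "z powr (p - 1) \<le> a powr (p - 1) + b powr (p - 1)"
    proof (cases "p - 1 \<ge> 0")
      case True
      hence "z powr (p - 1) \<le> b powr (p - 1)" using z assms(1) by (intro powr_mono2) auto
      thus ?thesis using powr_ge_zero[of a "p - 1"] by linarith
    next
      case False
      hence "z powr (p - 1) \<le> a powr (p - 1)" using z assms(1) by (intro powr_mono2') auto
      thus ?thesis using powr_ge_zero[of b "p - 1"] by linarith
    qed
    hence "\<bar>p\<bar> * z powr (p - 1) \<le> \<bar>p\<bar> * (a powr (p - 1) + b powr (p - 1))"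
      by (rule mult_left_mono) simp
    thus "norm (p * z powr (p - 1)) \<le> \<bar>p\<bar> * (a powr (p - 1) + b powr (p - 1))"
      by (simp add: abs_mult)
  qed (use assms in simp_all)
  thus ?thesis by simp
qed

lemma divide_diff_le_negative_denominators:
  fixes a a' b b' m R S :: real
  assumes m: "m > 0" and a: "\<bar>a\<bar> \<le> S" "\<bar>a'\<bar> \<le> S"
    and b: "- R \<le> b" "b \<le> - m" and b': "- R \<le> b'" "b' \<le> - m"
  shows "\<bar>a / b - a' / b'\<bar> \<le> (R * \<bar>a - a'\<bar> + S * \<bar>b - b'\<bar>) / m\<^sup>2"
proof -
  have "m * m \<le> (- b) * (- b')" using b b' m by (intro mult_mono) auto
  hence bb: "m\<^sup>2 \<le> b * b'" by (simp add: power2_eq_square)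
  have "0 < m\<^sup>2" using m by simp
  hence "b * b' > 0" using bb by linarith
  have "\<bar>(a - a') * b'\<bar> = (- b') * \<bar>a - a'\<bar>" using b' m by (simp add: abs_mult abs_of_neg)
  also have "\<dots> \<le> R * \<bar>a - a'\<bar>" using b' by (intro mult_right_mono) auto
  finally have "\<bar>(a - a') * b'\<bar> \<le> R * \<bar>a - a'\<bar>" .
  moreover have "\<bar>a' * (b' - b)\<bar> \<le> S * \<bar>b - b'\<bar>"
    using a by (simp add: abs_mult abs_minus_commute mult_right_mono)
  ultimately have num: "\<bar>(a - a') * b' + a' * (b' - b)\<bar> \<le> R * \<bar>a - a'\<bar> + S * \<bar>b - b'\<bar>"
    using abs_triangle_ineq[of "(a - a') * b'" "a' * (b' - b)"] by linarith
  have "\<bar>a / b - a' / b'\<bar> = \<bar>(a - a') * b' + a' * (b' - b)\<bar> / (b * b')"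
  proof -
    have "a / b - a' / b' = ((a - a') * b' + a' * (b' - b)) / (b * b')"
      using b b' m by (simp add: field_simps)
    thus ?thesis using \<open>b * b' > 0\<close> by (simp add: abs_divide)
  qed
  also have "\<dots> \<le> (R * \<bar>a - a'\<bar> + S * \<bar>b - b'\<bar>) / (b * b')"
    using num \<open>b * b' > 0\<close> by (intro divide_right_mono) auto
  also have "\<dots> \<le> (R * \<bar>a - a'\<bar> + S * \<bar>b - b'\<bar>) / m\<^sup>2"
    using num bb \<open>0 < m\<^sup>2\<close> \<open>b * b' > 0\<close> by (intro divide_left_mono) auto
  finally show ?thesis .
qed

lemma clamp_real: "(a::real) \<le> b \<Longrightarrow> clamp a b x = max a (min b x)"
  unfolding clamp_def Basis_real_def by simp

lemma clamp_real_bounds: "(a::real) \<le> b \<Longrightarrow> clamp a b x \<in> {a..b}"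
  by (simp add: clamp_real)

lemma clamp_real_id: "(a::real) \<le> x \<Longrightarrow> x \<le> b \<Longrightarrow> clamp a b x = x"
  by (simp add: clamp_real)

lemma clamp_real_mono: "(a::real) \<le> b \<Longrightarrow> x \<le> y \<Longrightarrow> clamp a b x \<le> clamp a b y"
  by (simp add: clamp_real)

lemma abs_clamp_real_diff_le: "(a::real) \<le> b \<Longrightarrow> \<bar>clamp a b x - clamp a b y\<bar> \<le> \<bar>x - y\<bar>"
  by (simp add: clamp_real)

lemma sum_le_nonpos_bound:
  fixes f :: "'a \<Rightarrow> real"
  assumes "finite S" "S \<noteq> {}" "\<And>i. i \<in> S \<Longrightarrow> f i \<le> a" "a \<le> 0"
  shows "sum f S \<le> a"
proof -
  have "sum f S \<le> card S * a" using sum_bounded_above[of S f a] assms(3) by simp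
  also have "\<dots> \<le> 1 * a"
    using assms by (intro mult_right_mono_neg) (auto simp: Suc_le_eq card_gt_0_iff)
  finally show ?thesis by simp
qed

lemma sum_ge_card_bound:
  fixes f :: "'a \<Rightarrow> real"
  assumes "\<And>i. i \<in> S \<Longrightarrow> a \<le> f i" "card S \<le> n" "a \<le> 0"
  shows "n * a \<le> sum f S"
proof -
  have "n * a \<le> card S * a" using assms by (intro mult_right_mono_neg) auto
  also have "\<dots> \<le> sum f S" using sum_bounded_below[of S a f] assms(1) by simp
  finally show ?thesis .
qed

section \<open>The terminal value problem\<close>

locale terminal_value_problem =
  fixes N qbar :: nat and T A k sig c varpi eta :: real and gamma :: "nat \<Rightarrow> real"
  assumes N: "N \<ge> 1" and T: "T \<ge> 0" and A: "A > 0" and k: "k > 0" and sig: "sig > 0"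
    and varpi: "varpi > 0" and eta: "eta > 0" and gamma: "\<forall>i<N. gamma i > 0"
begin

definition "Q = Qset N qbar"
definition "p = k * varpi / (sig * eta)"
definition "C = Cconst N gamma A k sig c varpi eta"
definition "C_S = CS N gamma eta sig"
definition "B = (\<Sum>q\<in>Q. C_S q)"
\<comment> \<open>\<open>{-M..-m}\<close> is the a priori range of every solution; \<open>B\<close> is any upper bound of \<open>C_S\<close> on \<open>Q\<close>.\<close>
definition "m = exp (- (2 * C * T))"
definition "M = exp (B * T)"

lemma finite_Q: "finite Q"
proof -
  have "Q \<subseteq> {f. \<forall>x. (x \<in> {..<N} \<longrightarrow> f x \<in> {- int qbar..int qbar}) \<and> (x \<notin> {..<N} \<longrightarrow> f x = 0)}"
    by (auto simp: Q_def Qset_def)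
  thus ?thesis by (rule finite_subset) (rule finite_set_of_finite_funs; simp)
qed

lemma p_pos: "p > 0"
  using k varpi sig eta by (simp add: p_def)

lemma C_pos: "C > 0"
proof -
  define S where "S = 1 + eta * sig * (\<Sum>i<N. 1 / (k * varpi + sig * gamma i))"
  have "(\<Sum>i<N. 1 / (k * varpi + sig * gamma i)) \<ge> 0"
    using gamma k varpi sig by (intro sum_nonneg) (simp add: add_pos_pos less_imp_le)
  hence "S > 0" using eta sig by (simp add: S_def add_pos_nonneg)
  moreover have "sig * eta / (k * varpi + sig * eta) > 0"
    using sig eta k varpi by (simp add: add_pos_pos)
  ultimately show ?thesis
    unfolding C_def Cconst_def Let_def S_def[symmetric] using A by (intro mult_pos_pos exp_gt_zero)
qed

lemma C_S_nonneg: "C_S q \<ge> 0"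
proof -
  have "eta / 2 * sig\<^sup>2 * gamma i * z\<^sup>2 \<ge> 0" if "i < N" for i z
    using gamma that eta by (intro mult_nonneg_nonneg) (auto simp: less_imp_le)
  thus ?thesis unfolding C_S_def CS_def by (intro add_nonneg_nonneg sum_nonneg) auto
qed

lemma C_S_le_B: "q \<in> Q \<Longrightarrow> C_S q \<le> B"
  unfolding B_def by (rule member_le_sum) (use C_S_nonneg finite_Q in auto)

lemma B_nonneg: "B \<ge> 0"
  unfolding B_def by (intro sum_nonneg C_S_nonneg)

lemma m_pos: "m > 0" and m_le_1: "m \<le> 1" and M_ge_1: "M \<ge> 1"
  using C_pos T B_nonneg by (simp_all add: m_def M_def)

abbreviation "act q j \<equiv> active N qbar gamma q j"
abbreviation "neighbour q i j \<equiv> ominus q i (phi j)"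

definition neighbour_sum :: "(nat \<Rightarrow> int) \<Rightarrow> side \<Rightarrow> ((nat \<Rightarrow> int) \<Rightarrow> real) \<Rightarrow> real" where
  "neighbour_sum q j y = (\<Sum>i\<in>act q j. y (neighbour q i j))"

definition jump_term :: "(nat \<Rightarrow> int) \<Rightarrow> side \<Rightarrow> ((nat \<Rightarrow> int) \<Rightarrow> real) \<Rightarrow> real" where
  "jump_term q j y = (if act q j = {} then 0 else (y q / neighbour_sum q j y) powr p)"

lemma active_subset: "act q j \<subseteq> {..<N}"
  by (auto simp: active_def Gset_def)

lemma finite_active: "finite (act q j)"
  using active_subset finite_subset by blast

lemma card_active_le: "card (act q j) \<le> N"
  using card_mono[OF _ active_subset] by simp

lemma neighbour_in_Q:
  assumes "q \<in> Q" "i \<in> act q j"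
  shows "neighbour q i j \<in> Q"
proof -
  have i: "i < N" "phi j * q i > - int qbar" using assms(2) by (auto simp: active_def Gset_def)
  moreover have "- int qbar \<le> q i" "q i \<le> int qbar" using assms(1) i(1) by (auto simp: Q_def Qset_def)
  ultimately have "- int qbar \<le> q i - phi j \<and> q i - phi j \<le> int qbar" by (cases j) auto
  thus ?thesis using assms(1) i(1) by (auto simp: Q_def Qset_def ominus_def)
qed

lemma inj_on_neighbour: "inj_on (\<lambda>i. neighbour q i j) (act q j)"
proof (rule inj_onI)
  fix i i' assume "neighbour q i j = neighbour q i' j"
  hence "neighbour q i j i = neighbour q i' j i" by simp
  moreover have "phi j \<noteq> 0" by (cases j) auto
  ultimately show "i = i'" by (auto simp: ominus_def split: if_splits)
qed

lemma sum_neighbours_le: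
  assumes "q \<in> Q" and "\<And>q'. q' \<in> Q \<Longrightarrow> f q' \<ge> (0::real)"
  shows "(\<Sum>i\<in>act q j. f (neighbour q i j)) \<le> (\<Sum>q'\<in>Q. f q')"
proof -
  have "(\<Sum>i\<in>act q j. f (neighbour q i j)) = (\<Sum>q'\<in>(\<lambda>i. neighbour q i j) ` act q j. f q')"
    by (rule sum.reindex[OF inj_on_neighbour, symmetric, unfolded comp_def])
  also have "\<dots> \<le> (\<Sum>q'\<in>Q. f q')"
    by (rule sum_mono2[OF finite_Q]) (use neighbour_in_Q assms in auto)
  finally show ?thesis .
qed

lemma denom_eq: "denom N qbar gamma v t q j = neighbour_sum q j (v t)"
proof -
  have "denom N qbar gamma v t q j
      = (\<Sum>i\<in>Gset N gamma. if phi j * q i > - int qbar then v t (neighbour q i j) else 0)"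
    unfolding denom_def by (rule sum.cong) auto
  also have "\<dots> = neighbour_sum q j (v t)"
    unfolding neighbour_sum_def active_def using finite_subset[of "Gset N gamma" "{..<N}"]
    by (subst sum.inter_filter) (auto simp: Gset_def)
  finally show ?thesis .
qed

lemma jterm_eq: "jterm N qbar gamma p v t q j = jump_term q j (v t)"
  by (simp add: jterm_def jump_term_def denom_eq)

lemma jump_term_cong:
  assumes "q \<in> Q" "\<And>q'. q' \<in> Q \<Longrightarrow> y q' = y' q'"
  shows "jump_term q j y = jump_term q j y'"
proof -
  have "neighbour_sum q j y = neighbour_sum q j y'"
    unfolding neighbour_sum_def using assms neighbour_in_Q by (intro sum.cong) auto
  thus ?thesis using assms by (simp add: jump_term_def)
qed

lemma jump_term_nonneg: "jump_term q j y \<ge> 0"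
  by (simp add: jump_term_def)

lemma neighbour_sum_le:
  assumes "q \<in> Q" "act q j \<noteq> {}" "\<And>q'. q' \<in> Q \<Longrightarrow> y q' \<le> a" "a \<le> 0"
  shows "neighbour_sum q j y \<le> a"
  unfolding neighbour_sum_def
  by (rule sum_le_nonpos_bound[OF finite_active]) (use assms neighbour_in_Q in auto)

lemma neighbour_sum_ge:
  assumes "q \<in> Q" "\<And>q'. q' \<in> Q \<Longrightarrow> - M \<le> y q'"
  shows "- (N * M) \<le> neighbour_sum q j y"
  using sum_ge_card_bound[where a="- M" and f="\<lambda>i. y (neighbour q i j)" and S="act q j" and n=N]
    card_active_le assms neighbour_in_Q M_ge_1 by (simp add: neighbour_sum_def)

lemma jump_term_le_one_at_max:
  assumes q: "q \<in> Q" and neg: "y q < 0" and max: "\<And>q'. q' \<in> Q \<Longrightarrow> y q' \<le> y q"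
  shows "jump_term q j y \<le> 1"
proof (cases "act q j = {}")
  case False
  have "neighbour_sum q j y \<le> y q"
    using neighbour_sum_le[OF q False max] neg by simp
  hence "0 \<le> y q / neighbour_sum q j y" "y q / neighbour_sum q j y \<le> 1"
    using neg by (auto simp: divide_nonpos_neg intro: divide_nonpos_nonpos)
  thus ?thesis using False p_pos by (simp add: jump_term_def powr_le1)
qed (simp add: jump_term_def)

definition in_range :: "((nat \<Rightarrow> int) \<Rightarrow> real) \<Rightarrow> bool" where
  "in_range y \<longleftrightarrow> (\<forall>q\<in>Q. y q \<in> {- M..- m})"

lemma ratio_bounds:
  assumes q: "q \<in> Q" and ne: "act q j \<noteq> {}" and "in_range y"
  shows "y q / neighbour_sum q j y \<in> {m / (N * M)..M / m}"
proof -
  have y: "\<And>q'. q' \<in> Q \<Longrightarrow> y q' \<in> {- M..- m}" using \<open>in_range y\<close> by (simp add: in_range_def)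
  have ns: "- (N * M) \<le> neighbour_sum q j y" "neighbour_sum q j y \<le> - m"
    using neighbour_sum_ge[OF q] neighbour_sum_le[OF q ne, of y "- m"] y m_pos by auto
  have "y q / neighbour_sum q j y = (- y q) / (- neighbour_sum q j y)" by simp
  moreover have "m / (N * M) \<le> (- y q) / (- neighbour_sum q j y)"
    using y[OF q] ns m_pos by (intro frac_le) auto
  moreover have "(- y q) / (- neighbour_sum q j y) \<le> M / m"
    using y[OF q] ns m_pos by (intro frac_le) auto
  ultimately show ?thesis by simp
qed

lemma jump_term_le:
  assumes "q \<in> Q" "in_range y"
  shows "jump_term q j y \<le> (M / m) powr p"
proof (cases "act q j = {}")
  case False
  have "m / (N * M) > 0" using m_pos M_ge_1 N by simp
  moreover have "y q / neighbour_sum q j y \<in> {m / (N * M)..M / m}"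
    by (rule ratio_bounds[OF assms(1) False assms(2)])
  ultimately show ?thesis using False p_pos
    by (auto simp: jump_term_def intro!: powr_mono2)
qed (simp add: jump_term_def)

lemma neighbour_sum_diff_le:
  assumes "q \<in> Q"
  shows "\<bar>neighbour_sum q j y - neighbour_sum q j y'\<bar> \<le> l1_dist Q y y'"
proof -
  have "\<bar>neighbour_sum q j y - neighbour_sum q j y'\<bar>
      \<le> (\<Sum>i\<in>act q j. \<bar>y (neighbour q i j) - y' (neighbour q i j)\<bar>)"
    unfolding neighbour_sum_def sum_subtractf[symmetric] by (rule sum_abs)
  also have "\<dots> \<le> l1_dist Q y y'"
    unfolding l1_dist_def by (rule sum_neighbours_le[OF assms]) simp
  finally show ?thesis .
qed

lemma jump_term_lipschitz:
  obtains L where "L \<ge> 0"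
    and "\<And>q j y y'. q \<in> Q \<Longrightarrow> in_range y \<Longrightarrow> in_range y' \<Longrightarrow>
           \<bar>jump_term q j y - jump_term q j y'\<bar> \<le> L * l1_dist Q y y'"
proof
  define lo where "lo = m / (N * M)"
  define hi where "hi = M / m"
  define L where "L = p * (lo powr (p - 1) + hi powr (p - 1)) * (N * M + M) / m\<^sup>2"
  have "lo > 0" using m_pos M_ge_1 N by (simp add: lo_def)
  show "L \<ge> 0" using p_pos M_ge_1 by (simp add: L_def)
  fix q j y y' assume q: "q \<in> Q" and y: "in_range y" and y': "in_range y'"
  show "\<bar>jump_term q j y - jump_term q j y'\<bar> \<le> L * l1_dist Q y y'"
  proof (cases "act q j = {}")
    case True
    thus ?thesis using mult_nonneg_nonneg[OF \<open>L \<ge> 0\<close> l1_dist_nonneg] by (simp add: jump_term_def)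
  next
    case False
    define r r' where "r = y q / neighbour_sum q j y" and "r' = y' q / neighbour_sum q j y'"
    have "\<bar>r powr p - r' powr p\<bar> \<le> p * (lo powr (p - 1) + hi powr (p - 1)) * \<bar>r - r'\<bar>"
      using powr_lipschitz_on_interval[OF \<open>lo > 0\<close>, of r hi r' p] p_pos
        ratio_bounds[OF q False y] ratio_bounds[OF q False y'] by (simp add: r_def r'_def lo_def hi_def)
    also have "\<bar>r - r'\<bar> \<le> (N * M + M) / m\<^sup>2 * l1_dist Q y y'"
    proof -
      have "\<bar>r - r'\<bar> \<le> (N * M * \<bar>y q - y' q\<bar> + M * \<bar>neighbour_sum q j y - neighbour_sum q j y'\<bar>) / m\<^sup>2"
        unfolding r_def r'_def
        using neighbour_sum_ge[OF q, of y j] neighbour_sum_ge[OF q, of y' j] m_pos y y' q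
          neighbour_sum_le[OF q False, of y "- m"] neighbour_sum_le[OF q False, of y' "- m"]
        by (intro divide_diff_le_negative_denominators) (auto simp: in_range_def)
      also have "\<dots> \<le> (N * M * l1_dist Q y y' + M * l1_dist Q y y') / m\<^sup>2"
        using abs_le_l1_dist[OF finite_Q q, of y y'] neighbour_sum_diff_le[OF q, of j y y'] M_ge_1
        by (intro divide_right_mono add_mono mult_left_mono) auto
      finally show ?thesis by (simp add: algebra_simps)
    qed
    finally show ?thesis using False p_pos
      by (simp add: jump_term_def r_def r'_def L_def mult_left_mono)
  qed
qed

definition rate :: "(nat \<Rightarrow> int) \<Rightarrow> ((nat \<Rightarrow> int) \<Rightarrow> real) \<Rightarrow> real" where
  "rate q y = - C_S q + C * (jump_term q Side_a y + jump_term q Side_b y)"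

lemma rate_ge:
  assumes "q \<in> Q"
  shows "- B \<le> rate q y"
proof -
  have "0 \<le> C * (jump_term q Side_a y + jump_term q Side_b y)"
    using jump_term_nonneg[of q _ y] C_pos by simp
  thus ?thesis using C_S_le_B[OF assms] by (simp add: rate_def)
qed

lemma rate_le_at_max:
  assumes "q \<in> Q" "y q < 0" "\<And>q'. q' \<in> Q \<Longrightarrow> y q' \<le> y q"
  shows "rate q y \<le> 2 * C"
proof -
  have "jump_term q Side_a y + jump_term q Side_b y \<le> 2"
    using jump_term_le_one_at_max[where q=q and y=y and j=Side_a, OF assms]
      jump_term_le_one_at_max[where q=q and y=y and j=Side_b, OF assms] by linarith
  hence "C * (jump_term q Side_a y + jump_term q Side_b y) \<le> 2 * C" using C_pos by simp
  thus ?thesis using C_S_nonneg[of q] by (simp add: rate_def)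
qed

lemma rate_bounded:
  assumes "q \<in> Q" "in_range y"
  shows "\<bar>rate q y\<bar> \<le> B + 2 * C * (M / m) powr p"
proof -
  have "C * (jump_term q Side_a y + jump_term q Side_b y) \<le> 2 * C * (M / m) powr p"
    using jump_term_le[OF assms, of Side_a] jump_term_le[OF assms, of Side_b] C_pos
    by (simp add: mult_left_mono)
  moreover have "0 \<le> C * (jump_term q Side_a y + jump_term q Side_b y)"
    using jump_term_nonneg[of q _ y] C_pos by simp
  ultimately show ?thesis
    using C_S_nonneg[of q] C_S_le_B[OF assms(1)] by (simp add: rate_def abs_le_iff)
qed

lemma rate_lipschitz:
  obtains L where "L \<ge> 0"
    and "\<And>q y y'. q \<in> Q \<Longrightarrow> in_range y \<Longrightarrow> in_range y' \<Longrightarrow>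
           \<bar>rate q y - rate q y'\<bar> \<le> L * l1_dist Q y y'"
proof -
  obtain LJ where "LJ \<ge> 0"
    and LJ: "\<And>q j y y'. q \<in> Q \<Longrightarrow> in_range y \<Longrightarrow> in_range y' \<Longrightarrow>
               \<bar>jump_term q j y - jump_term q j y'\<bar> \<le> LJ * l1_dist Q y y'"
    using jump_term_lipschitz by blast
  show ?thesis
  proof
    show "2 * C * LJ \<ge> 0" using C_pos \<open>LJ \<ge> 0\<close> by simp
    fix q y y' assume "q \<in> Q" "in_range y" "in_range y'"
    hence "\<bar>jump_term q Side_a y - jump_term q Side_a y'\<bar> \<le> LJ * l1_dist Q y y'"
      and "\<bar>jump_term q Side_b y - jump_term q Side_b y'\<bar> \<le> LJ * l1_dist Q y y'"
      using LJ by blast+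
    hence "\<bar>(jump_term q Side_a y - jump_term q Side_a y') + (jump_term q Side_b y - jump_term q Side_b y')\<bar>
        \<le> 2 * (LJ * l1_dist Q y y')"
      using abs_triangle_ineq[of "jump_term q Side_a y - jump_term q Side_a y'"] by linarith
    hence "C * \<bar>(jump_term q Side_a y - jump_term q Side_a y') + (jump_term q Side_b y - jump_term q Side_b y')\<bar>
        \<le> C * (2 * (LJ * l1_dist Q y y'))"
      using C_pos by (intro mult_left_mono) auto
    moreover have "rate q y - rate q y'
        = C * ((jump_term q Side_a y - jump_term q Side_a y') + (jump_term q Side_b y - jump_term q Side_b y'))"
      by (simp add: rate_def algebra_simps)
    ultimately show "\<bar>rate q y - rate q y'\<bar> \<le> 2 * C * LJ * l1_dist Q y y'"
      using C_pos by (simp add: abs_mult)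
  qed
qed

lemma m_le_M: "- M \<le> - m"
  using m_le_1 M_ge_1 by simp

definition truncate :: "((nat \<Rightarrow> int) \<Rightarrow> real) \<Rightarrow> (nat \<Rightarrow> int) \<Rightarrow> real" where
  "truncate y q = clamp (- M) (- m) (y q)"

definition truncated_field :: "(nat \<Rightarrow> int) \<Rightarrow> ((nat \<Rightarrow> int) \<Rightarrow> real) \<Rightarrow> real" where
  "truncated_field q y = clamp (- (M + 1)) (M + 1) (y q) * rate q (truncate y)"

lemma in_range_truncate: "in_range (truncate y)"
  using clamp_real_bounds[OF m_le_M] by (simp add: in_range_def truncate_def)

lemma l1_dist_truncate_le: "l1_dist Q (truncate x) (truncate y) \<le> l1_dist Q x y"
  unfolding l1_dist_def truncate_def by (rule sum_mono) (rule abs_clamp_real_diff_le[OF m_le_M])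

lemma rate_truncate:
  assumes "q \<in> Q" "in_range y"
  shows "rate q (truncate y) = rate q y"
proof -
  have "truncate y q' = y q'" if "q' \<in> Q" for q'
    using assms(2) that by (simp add: in_range_def truncate_def clamp_real_id)
  hence "jump_term q j (truncate y) = jump_term q j y" for j by (rule jump_term_cong[OF assms(1)])
  thus ?thesis by (simp add: rate_def)
qed

lemma truncated_field_eq:
  assumes "q \<in> Q" "in_range y"
  shows "truncated_field q y = y q * rate q y"
proof -
  have "clamp (- (M + 1)) (M + 1) (y q) = y q"
    using assms m_pos by (intro clamp_real_id) (auto simp: in_range_def)
  thus ?thesis using rate_truncate[OF assms] by (simp add: truncated_field_def)
qed

lemma abs_clamp_le: "\<bar>clamp (- (M + 1)) (M + 1) z\<bar> \<le> M + 1"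
  using clamp_real_bounds[of "- (M + 1)" "M + 1" z] M_ge_1 by auto

lemma truncated_field_bounded:
  assumes "q \<in> Q"
  shows "\<bar>truncated_field q y\<bar> \<le> (M + 1) * (B + 2 * C * (M / m) powr p)"
  unfolding truncated_field_def abs_mult
  by (rule mult_mono[OF abs_clamp_le rate_bounded[OF assms in_range_truncate]]) (use M_ge_1 in auto)

lemma truncated_field_lipschitz:
  obtains L where "L \<ge> 0"
    and "\<And>q x y. q \<in> Q \<Longrightarrow> \<bar>truncated_field q x - truncated_field q y\<bar> \<le> L * l1_dist Q x y"
proof -
  obtain LR where "LR \<ge> 0"
    and LR: "\<And>q y y'. q \<in> Q \<Longrightarrow> in_range y \<Longrightarrow> in_range y' \<Longrightarrow>
               \<bar>rate q y - rate q y'\<bar> \<le> LR * l1_dist Q y y'"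
    using rate_lipschitz by blast
  define KR where "KR = B + 2 * C * (M / m) powr p"
  define cl where "cl z = clamp (- (M + 1)) (M + 1) z" for z
  have "KR + (M + 1) * LR \<ge> 0" using B_nonneg C_pos M_ge_1 \<open>LR \<ge> 0\<close> by (simp add: KR_def)
  moreover have "\<bar>truncated_field q x - truncated_field q y\<bar> \<le> (KR + (M + 1) * LR) * l1_dist Q x y"
    if q: "q \<in> Q" for q x y
  proof -
    have "\<bar>cl (x q) - cl (y q)\<bar> \<le> l1_dist Q x y"
      using abs_clamp_real_diff_le[of "- (M + 1)" "M + 1" "x q" "y q"] abs_le_l1_dist[OF finite_Q q, of x y] M_ge_1
      by (simp add: cl_def)
    hence first: "\<bar>(cl (x q) - cl (y q)) * rate q (truncate x)\<bar> \<le> l1_dist Q x y * KR"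
      unfolding abs_mult KR_def
      by (rule mult_mono) (use rate_bounded[OF q in_range_truncate] l1_dist_nonneg in auto)
    have "\<bar>rate q (truncate x) - rate q (truncate y)\<bar> \<le> LR * l1_dist Q (truncate x) (truncate y)"
      by (rule LR[OF q in_range_truncate in_range_truncate])
    also have "\<dots> \<le> LR * l1_dist Q x y"
      by (rule mult_left_mono[OF l1_dist_truncate_le \<open>LR \<ge> 0\<close>])
    finally have second:
      "\<bar>cl (y q) * (rate q (truncate x) - rate q (truncate y))\<bar> \<le> (M + 1) * (LR * l1_dist Q x y)"
      unfolding abs_mult cl_def by (rule mult_mono[OF abs_clamp_le]) (use M_ge_1 in auto)
    have "truncated_field q x - truncated_field q y = (cl (x q) - cl (y q)) * rate q (truncate x)
        + cl (y q) * (rate q (truncate x) - rate q (truncate y))"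
      by (simp add: truncated_field_def cl_def algebra_simps)
    hence "\<bar>truncated_field q x - truncated_field q y\<bar> \<le> \<bar>(cl (x q) - cl (y q)) * rate q (truncate x)\<bar>
        + \<bar>cl (y q) * (rate q (truncate x) - rate q (truncate y))\<bar>"
      by (simp only: abs_triangle_ineq)
    also have "\<dots> \<le> l1_dist Q x y * KR + (M + 1) * (LR * l1_dist Q x y)"
      by (rule add_mono[OF first second])
    finally show ?thesis by (simp add: algebra_simps)
  qed
  ultimately show ?thesis by (rule that)
qed

lemma lipschitz_field_truncated_field:
  obtains L K where "lipschitz_field Q truncated_field L K T"
proof -
  obtain L where "L \<ge> 0"
    and "\<And>q x y. q \<in> Q \<Longrightarrow> \<bar>truncated_field q x - truncated_field q y\<bar> \<le> L * l1_dist Q x y"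
    using truncated_field_lipschitz by blast
  moreover have "(M + 1) * (B + 2 * C * (M / m) powr p) \<ge> 0"
    using M_ge_1 B_nonneg C_pos by simp
  ultimately have "lipschitz_field Q truncated_field L ((M + 1) * (B + 2 * C * (M / m) powr p)) T"
    using finite_Q truncated_field_bounded T by unfold_locales auto
  thus ?thesis by (rule that)
qed

lemma is_solution_iff:
  "is_solution N qbar T A k sig c varpi eta gamma v \<longleftrightarrow>
     (\<forall>q\<in>Q. continuous_on {0..T} (\<lambda>t. v t q) \<and> v T q = -1 \<and>
        (\<forall>t\<in>{0..<T}. well_defined N qbar gamma v t q \<and>
           ((\<lambda>s. v s q) has_real_derivative v t q * rate q (v t)) (at t within {0..T})))"
proof -
  have "- v t q * CS N gamma eta sig q + v t q * Cconst N gamma A k sig c varpi eta *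
          (\<Sum>j\<in>{Side_a, Side_b}. jterm N qbar gamma (k * varpi / (sig * eta)) v t q j)
        = v t q * rate q (v t)" for t q
    using jterm_eq[of v t q] by (simp add: p_def rate_def C_def C_S_def algebra_simps)
  thus ?thesis by (simp add: is_solution_def Q_def)
qed

lemma well_defined_if_in_range:
  assumes "q \<in> Q" "in_range (v t)"
  shows "well_defined N qbar gamma v t q"
  unfolding well_defined_def denom_eq
proof (intro allI impI conjI)
  fix j assume "act q j \<noteq> {}"
  hence "neighbour_sum q j (v t) \<le> - m"
    using neighbour_sum_le[OF assms(1)] assms(2) m_pos by (auto simp: in_range_def)
  moreover have "v t q \<le> - m" using assms by (simp add: in_range_def)
  ultimately show "neighbour_sum q j (v t) \<noteq> 0" "0 \<le> v t q / neighbour_sum q j (v t)"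
    using m_pos by (auto intro: divide_nonpos_nonpos)
qed

lemma in_range_by_comparison:
  fixes X D G :: "real \<Rightarrow> (nat \<Rightarrow> int) \<Rightarrow> real"
  assumes cont: "\<And>q. q \<in> Q \<Longrightarrow> continuous_on {0..T} (\<lambda>t. X t q)"
    and terminal: "\<And>q. q \<in> Q \<Longrightarrow> X T q = -1"
    and X': "\<And>q t. q \<in> Q \<Longrightarrow> t \<in> {0..<T} \<Longrightarrow> ((\<lambda>t. X t q) has_real_derivative D t q) (at t within {0..T})"
    and rate: "\<And>q t. q \<in> Q \<Longrightarrow> t \<in> {0..<T} \<Longrightarrow> \<bar>X t q\<bar> \<le> M + 1 \<Longrightarrow> D t q = X t q * G t q"
    and G_ge: "\<And>q t. q \<in> Q \<Longrightarrow> t \<in> {0..<T} \<Longrightarrow> - B \<le> G t q"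
    and G_le: "\<And>q t. q \<in> Q \<Longrightarrow> t \<in> {0..<T} \<Longrightarrow> X t q < 0 \<Longrightarrow> \<forall>q'\<in>Q. X t q' \<le> X t q \<Longrightarrow> G t q \<le> 2 * C"
    and t: "t \<in> {0..T}"
  shows "in_range (X t)"
  unfolding in_range_def
proof
  fix q assume q: "q \<in> Q"
  have "exp (B * T) < M + 1" by (simp add: M_def)
  hence "- exp (B * (T - t)) \<le> X t q"
    using lower_exp_bound[OF finite_Q T B_nonneg cont terminal X' rate _ G_ge q t] by simp
  moreover have "X t q \<le> - exp (- (2 * C * (T - t)))"
    by (rule upper_exp_bound[OF finite_Q T _ cont terminal X' rate _ G_le q t])
       (use C_pos M_ge_1 in simp_all)
  moreover have "exp (B * (T - t)) \<le> M" using B_nonneg t by (simp add: M_def mult_left_mono)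
  moreover have "m \<le> exp (- (2 * C * (T - t)))" using C_pos t by (simp add: m_def mult_left_mono)
  ultimately show "X t q \<in> {- M..- m}" by simp
qed

lemma solution_in_range:
  assumes "is_solution N qbar T A k sig c varpi eta gamma v" and t: "t \<in> {0..T}"
  shows "in_range (v t)"
  using assms(1) unfolding is_solution_iff
  by (intro in_range_by_comparison[where D="\<lambda>t q. v t q * rate q (v t)" and G="\<lambda>t q. rate q (v t)" and X=v, OF _ _ _ _ _ _ t])
     (auto intro: rate_ge rate_le_at_max)

lemma exists_solution_in_range:
  "\<exists>v. is_solution N qbar T A k sig c varpi eta gamma v \<and> (\<forall>t\<in>{0..T}. in_range (v t))"
proof -
  obtain L K where "lipschitz_field Q truncated_field L K T" by (rule lipschitz_field_truncated_field)
  then interpret lipschitz_field Q truncated_field L K T "\<lambda>_. -1" .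
  obtain X where X: "integral_solution X" using integral_solution_exists by blast
  have cont: "\<And>q. q \<in> Q \<Longrightarrow> continuous_on {0..T} (\<lambda>t. X t q)"
    using X by (simp add: integral_solution_def continuous_path_def)
  have terminal: "\<And>q. q \<in> Q \<Longrightarrow> X T q = -1"
    using X T by (auto simp: integral_solution_def picard_map_def)
  have X': "((\<lambda>t. X t q) has_real_derivative truncated_field q (X t)) (at t within {0..T})"
    if "q \<in> Q" "t \<in> {0..<T}" for q t
    using integral_solution_has_real_derivative[OF X] that by simp
  have range: "in_range (X t)" if "t \<in> {0..T}" for t
  proof (rule in_range_by_comparison[OF cont terminal X' _ rate_ge _ that])
    fix q t assume "q \<in> Q" "\<bar>X t q\<bar> \<le> M + 1"
    thus "truncated_field q (X t) = X t q * rate q (truncate (X t))"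
      by (simp add: truncated_field_def clamp_real_id abs_le_iff)
  next
    fix q t assume q: "q \<in> Q" and max: "\<forall>q'\<in>Q. X t q' \<le> X t q"
    show "rate q (truncate (X t)) \<le> 2 * C"
    proof (rule rate_le_at_max[OF q])
      show "truncate (X t) q < 0" using in_range_truncate[of "X t"] q m_pos by (auto simp: in_range_def)
      show "truncate (X t) q' \<le> truncate (X t) q" if "q' \<in> Q" for q'
        using max that m_le_M by (simp add: truncate_def clamp_real_mono)
    qed
  qed
  have "is_solution N qbar T A k sig c varpi eta gamma X"
    unfolding is_solution_iff
    using cont terminal X' range well_defined_if_in_range truncated_field_eq by auto
  thus ?thesis using range by blast
qed

lemma solution_unique:
  assumes v: "is_solution N qbar T A k sig c varpi eta gamma v"
    and w: "is_solution N qbar T A k sig c varpi eta gamma w"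
    and "q \<in> Q" "t \<in> {0..T}"
  shows "v t q = w t q"
proof -
  obtain L K where "lipschitz_field Q truncated_field L K T" by (rule lipschitz_field_truncated_field)
  then interpret lipschitz_field Q truncated_field L K T "\<lambda>_. -1" .
  have "integral_solution u" if u: "is_solution N qbar T A k sig c varpi eta gamma u" for u
  proof (rule integral_solution_if_has_real_derivative)
    show "continuous_path u" "\<And>q. q \<in> Q \<Longrightarrow> u T q = -1"
      using u by (auto simp: is_solution_iff continuous_path_def)
    fix q t assume "q \<in> Q" "t \<in> {0..<T}"
    thus "((\<lambda>t. u t q) has_real_derivative truncated_field q (u t)) (at t within {0..T})"
      using u truncated_field_eq[OF _ solution_in_range[OF u]] by (auto simp: is_solution_iff)
  qed
  thus ?thesis using integral_solution_unique assms by blast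
qed

end

theorem lemma4p2:
  fixes N qbar :: nat and T A k sig c varpi eta :: real and gamma :: "nat \<Rightarrow> real"
  assumes "N \<ge> 1"
    and "T > 0" "A > 0" "k > 0" "sig > 0" "c > 0" "varpi > 0" "eta > 0"
    and "\<forall>i<N. gamma i > 0"
  shows "\<exists>v. is_solution N qbar T A k sig c varpi eta gamma v \<and> bounded_on N qbar T v
           \<and> (\<forall>t\<in>{0..T}. \<forall>q\<in>Qset N qbar. v t q < 0)
           \<and> (\<forall>w. is_solution N qbar T A k sig c varpi eta gamma w \<and> bounded_on N qbar T w
                  \<longrightarrow> (\<forall>t\<in>{0..T}. \<forall>q\<in>Qset N qbar. w t q = v t q))"
proof -
  interpret terminal_value_problem N qbar T A k sig c varpi eta gamma
    using assms by unfold_locales auto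
  obtain v where v: "is_solution N qbar T A k sig c varpi eta gamma v"
    and range: "\<And>t q. t \<in> {0..T} \<Longrightarrow> q \<in> Q \<Longrightarrow> - M \<le> v t q \<and> v t q \<le> - m"
    using exists_solution_in_range by (auto simp: in_range_def)
  have "bounded_on N qbar T v"
    unfolding bounded_on_def Q_def[symmetric] using range m_pos by (intro exI[of _ M]) force
  moreover have "\<forall>t\<in>{0..T}. \<forall>q\<in>Qset N qbar. v t q < 0"
    using range m_pos by (force simp: Q_def)
  moreover have "\<forall>t\<in>{0..T}. \<forall>q\<in>Qset N qbar. w t q = v t q"
    if "is_solution N qbar T A k sig c varpi eta gamma w" for w
    using solution_unique[OF that v] by (simp add: Q_def)
  ultimately show ?thesis using v by blast
qed

end
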